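(* Let $\tilde\tau\in(0,1/2)$ and $R=2^{[1-H(\tau')]N/2}$, where $\tau'=(\tau N-2)/(N-1)$. Let $\mathcal N_R$ be a neighborhood of radius $R$ centered at an arbitrary vertex, and let $A$ be the event that for every $v\in\mathcal N_R$, a $+1$ agent would be happy at the location of $v$ at time $0$. Then $P(A)\to1$ as $N\to\infty$.
   Context: Setting: $G_n$ is the $n\times n$ torus grid, $w$ is a positive integer, and $N=(2w+1)^2$. $\mathcal N(v)$ is the set of vertices within $\ell_\infty$ distance $w$ of $v$, and a neighborhood of radius $\rho$ is defined analogously. In the initial configuration (time $0$), each vertex holds an agent of type $\pm1$, independently with probability $1/2$ each. The intolerance is $\tau=\lceil\tilde\tau N\rceil/N$, and $H$ is the binary entropy function. "A $+1$ agent would be happy at the location of $v$" means: if the agent at $v$ were replaced by an agent of type $+1$, with all other agents unchanged, then at least a fraction $\tau$ of the agents in $\mathcal N(v)$ would be of type $+1$. *)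

theory Defs
  imports "HOL-Probability.Probability"
begin

definition vertices :: "nat \<Rightarrow> (nat \<times> nat) set" where
  "vertices n = {0..<n} \<times> {0..<n}"

definition cyc_dist :: "nat \<Rightarrow> nat \<Rightarrow> nat \<Rightarrow> nat" where
  "cyc_dist n a b = (let d = (if a \<le> b then b - a else a - b) in min d (n - d))"

definition torus_dist :: "nat \<Rightarrow> nat \<times> nat \<Rightarrow> nat \<times> nat \<Rightarrow> nat" where
  "torus_dist n u v = max (cyc_dist n (fst u) (fst v)) (cyc_dist n (snd u) (snd v))"

definition nbhd_rad :: "nat \<Rightarrow> real \<Rightarrow> nat \<times> nat \<Rightarrow> (nat \<times> nat) set" where
  "nbhd_rad n r v = {u \<in> vertices n. real (torus_dist n u v) \<le> r}"

definition nbhd :: "nat \<Rightarrow> nat \<Rightarrow> nat \<times> nat \<Rightarrow> (nat \<times> nat) set" where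
  "nbhd n w v = nbhd_rad n (real w) v"

definition Nsize :: "nat \<Rightarrow> nat" where
  "Nsize w = (2 * w + 1)^2"

definition tau :: "real \<Rightarrow> nat \<Rightarrow> real" where
  "tau tt w = real_of_int \<lceil>tt * real (Nsize w)\<rceil> / real (Nsize w)"

definition tau' :: "real \<Rightarrow> nat \<Rightarrow> real" where
  "tau' tt w = (tau tt w * real (Nsize w) - 2) / (real (Nsize w) - 1)"

definition bin_entropy :: "real \<Rightarrow> real" where
  "bin_entropy p = - p * log 2 p - (1 - p) * log 2 (1 - p)"

definition Rrad :: "real \<Rightarrow> nat \<Rightarrow> real" where
  "Rrad tt w = 2 powr ((1 - bin_entropy (tau' tt w)) * real (Nsize w) / 2)"

definition configs :: "nat \<Rightarrow> ((nat \<times> nat) \<Rightarrow> int) set" where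
  "configs n = vertices n \<rightarrow>\<^sub>E {-1, 1}"

definition plus_happy :: "nat \<Rightarrow> nat \<Rightarrow> real \<Rightarrow> ((nat \<times> nat) \<Rightarrow> int) \<Rightarrow> nat \<times> nat \<Rightarrow> bool" where
  "plus_happy n w tt s v \<longleftrightarrow>
     real (card {u \<in> nbhd n w v. (s(v := 1)) u = 1}) \<ge> tau tt w * real (card (nbhd n w v))"

definition event_A :: "nat \<Rightarrow> nat \<Rightarrow> real \<Rightarrow> nat \<times> nat \<Rightarrow> ((nat \<times> nat) \<Rightarrow> int) set" where
  "event_A n w tt v0 = {s \<in> configs n. \<forall>v \<in> nbhd_rad n (Rrad tt w) v0. plus_happy n w tt s v}"

end

theory Submission imports Defs "HOL-Real_Asymp.Real_Asymp" begin

text \<open>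
  A +1 agent placed at v is unhappy only if at most m = ceil(tt N) - 2 of the other M = N - 1
  agents of N(v) have type +1, an event of probability 2^(-M) sum_{k <= m} (M choose k).
  Since m <= tt M with tt < 1/2, this binomial tail is at most a constant times its last term,
  and with p = m/M = tau' one has 2^(-M) = 2^(-(1 - H(p)) M) p^m (1-p)^(M-m). The union bound
  over the O(R^2) = O(2^((1 - H(tau')) N)) vertices of N_R therefore loses only a constant factor:
  the failure probability is O((M choose m) p^m (1-p)^(M-m)), the probability of the mode of
  Bin(M, p), which is O(1/sqrt m) = O(1/sqrt N).
\<close>

section \<open>Neighbourhoods on the torus\<close>

lemma cyc_dist_le_iff:
  assumes "a < n" "b < n"
  shows "cyc_dist n a b \<le> k \<longleftrightarrow>
           (a \<le> b + k \<and> b \<le> a + k) \<or> b + n \<le> a + k \<or> a + n \<le> b + k"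
  using assms by (auto simp: cyc_dist_def Let_def min_def split: if_splits)

lemma cyc_dist_commute: "cyc_dist n a b = cyc_dist n b a"
  by (auto simp: cyc_dist_def Let_def)

definition cyc_ball :: "nat \<Rightarrow> nat \<Rightarrow> nat \<Rightarrow> nat set" where
  "cyc_ball n a k = {b. b < n \<and> cyc_dist n a b \<le> k}"

lemma finite_cyc_ball [simp]: "finite (cyc_ball n a k)"
  by (simp add: cyc_ball_def)

lemma card_cyc_ball:
  assumes "a < n" "2*k+1 \<le> n"
  shows "card (cyc_ball n a k) = 2*k+1"
proof -
  let ?I1 = "{a - k..<min (a+k+1) n}" and ?I2 = "{..<a+k+1-n}" and ?I3 = "{a+n-k..<n}"
  have ball: "cyc_ball n a k = ?I1 \<union> ?I2 \<union> ?I3"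
    using assms by (auto simp: cyc_ball_def cyc_dist_le_iff)
  have "card (cyc_ball n a k) = card (?I1 \<union> ?I2) + card ?I3"
    unfolding ball by (rule card_Un_disjoint) (use assms in auto)
  also have "\<dots> = card ?I1 + card ?I2 + card ?I3"
    by (subst card_Un_disjoint) (use assms in auto)
  also have "\<dots> = 2*k+1"
    using assms by (cases "a + k + 1 \<le> n"; cases "k \<le> a") (simp_all add: min_def)
  finally show ?thesis .
qed

lemma card_cyc_ball_le:
  assumes "a < n"
  shows "card (cyc_ball n a k) \<le> 4*k+1"
proof -
  have "cyc_ball n a k \<subseteq> {a - k..a+k} \<union> {..<k} \<union> {n-k..<n}"
    using assms by (auto simp: cyc_ball_def cyc_dist_le_iff)
  then have "card (cyc_ball n a k) \<le> card ({a - k..a+k} \<union> {..<k} \<union> {n-k..<n})"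
    by (intro card_mono) simp_all
  also have "\<dots> \<le> card {a - k..a+k} + card {..<k} + card {n-k..<n}"
    by (meson add_right_mono card_Un_le le_trans)
  also have "\<dots> \<le> 4*k+1" by simp
  finally show ?thesis .
qed

lemma nbhd_eq_cyc_ball_Times: "nbhd n w v = cyc_ball n (fst v) w \<times> cyc_ball n (snd v) w"
  by (auto simp: nbhd_def nbhd_rad_def vertices_def torus_dist_def cyc_ball_def cyc_dist_commute)

lemma nbhd_rad_subset_cyc_ball_Times:
  "nbhd_rad n r v \<subseteq> cyc_ball n (fst v) (nat \<lfloor>r\<rfloor>) \<times> cyc_ball n (snd v) (nat \<lfloor>r\<rfloor>)"
  by (auto simp: nbhd_rad_def vertices_def torus_dist_def cyc_ball_def cyc_dist_commute
      intro!: le_nat_floor)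

lemma nbhd_rad_subset_vertices: "nbhd_rad n r v \<subseteq> vertices n"
  by (simp add: nbhd_rad_def)

lemma center_in_nbhd: "v \<in> vertices n \<Longrightarrow> v \<in> nbhd n w v"
  by (auto simp: nbhd_def nbhd_rad_def torus_dist_def cyc_dist_def)

lemma card_nbhd:
  assumes "v \<in> vertices n" "2*w+1 \<le> n"
  shows "card (nbhd n w v) = Nsize w"
  using assms
  by (auto simp: vertices_def nbhd_eq_cyc_ball_Times card_cartesian_product card_cyc_ball
      Nsize_def power2_eq_square)

lemma card_nbhd_rad_le:
  assumes "v \<in> vertices n" "0 \<le> r"
  shows "real (card (nbhd_rad n r v)) \<le> (4*r+1)^2"
proof -
  define k where "k = nat \<lfloor>r\<rfloor>"
  have "card (nbhd_rad n r v) \<le> card (cyc_ball n (fst v) k \<times> cyc_ball n (snd v) k)"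
    unfolding k_def by (intro card_mono nbhd_rad_subset_cyc_ball_Times) simp
  also have "\<dots> \<le> (4*k+1) * (4*k+1)"
    unfolding card_cartesian_product
    using assms card_cyc_ball_le by (intro mult_mono) (auto simp: vertices_def)
  finally have "real (card (nbhd_rad n r v)) \<le> real (4*k+1) * real (4*k+1)"
    by (metis of_nat_le_iff of_nat_mult)
  also have "\<dots> \<le> (4*r+1) * (4*r+1)"
    using assms(2) unfolding k_def by (intro mult_mono) linarith+
  finally show ?thesis by (simp add: power2_eq_square)
qed

lemma card_configs: "card (configs n) = 2 ^ card (vertices n)"
proof -
  have "card {-1, 1::int} = 2" by simp
  then show ?thesis
    by (simp only: configs_def card_PiE vertices_def finite_SigmaI finite_atLeastLessThan prod_constant)
qed

lemma finite_configs [simp]: "finite (configs n)"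
  by (simp add: configs_def vertices_def finite_PiE)

lemma card_subsets_card_le:
  assumes "finite T"
  shows "card {A. A \<subseteq> T \<and> card A \<le> m} \<le> (\<Sum>k\<le>m. card T choose k)"
proof -
  have "{A. A \<subseteq> T \<and> card A \<le> m} = (\<Union>k\<le>m. {A. A \<subseteq> T \<and> card A = k})" by auto
  then have "card {A. A \<subseteq> T \<and> card A \<le> m} \<le> (\<Sum>k\<le>m. card {A. A \<subseteq> T \<and> card A = k})"
    by (simp add: card_UN_le)
  also have "\<dots> = (\<Sum>k\<le>m. card T choose k)" using n_subsets[OF assms] by simp
  finally show ?thesis .
qed

text \<open>A configuration is determined by its set of +1 vertices, which splits into a small
  subset of \<open>T\<close> and an arbitrary subset of \<open>V - T\<close>.\<close>
lemma card_configs_few_plus_le: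
  assumes "finite V" "T \<subseteq> V"
  shows "card {s \<in> V \<rightarrow>\<^sub>E {-1,1::int}. card {u \<in> T. s u = 1} \<le> m}
         \<le> (\<Sum>k\<le>m. card T choose k) * 2 ^ (card V - card T)"
proof -
  let ?E = "{s \<in> V \<rightarrow>\<^sub>E {-1,1::int}. card {u \<in> T. s u = 1} \<le> m}"
  let ?P = "{A. A \<subseteq> T \<and> card A \<le> m} \<times> Pow (V - T)"
  define plus where "plus s = {u \<in> V. s u = (1::int)}" for s :: "_ \<Rightarrow> int"
  have fin_T: "finite T" using assms finite_subset by blast
  have inj_plus: "inj_on plus (V \<rightarrow>\<^sub>E {-1,1})"
  proof (rule inj_onI)
    fix s t assume s: "s \<in> V \<rightarrow>\<^sub>E {-1,1::int}" and t: "t \<in> V \<rightarrow>\<^sub>E {-1,1::int}"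
      and "plus s = plus t"
    then have "s x = 1 \<longleftrightarrow> t x = 1" if "x \<in> V" for x
      using that unfolding plus_def by blast
    moreover have "s x \<in> {-1,1}" "t x \<in> {-1,1}" if "x \<in> V" for x
      using s t that by auto
    ultimately show "s = t" by (intro PiE_ext[OF s t]) fastforce
  qed
  have inj_split: "inj_on (\<lambda>S. (S \<inter> T, S - T)) (Pow V)"
    by (rule inj_onI) (metis Int_Diff_Un prod.inject)
  have "inj_on plus ?E" using inj_plus by (rule inj_on_subset) auto
  moreover have "inj_on (\<lambda>S. (S \<inter> T, S - T)) (plus ` ?E)"
    using inj_split by (rule inj_on_subset) (auto simp: plus_def)
  ultimately have "inj_on ((\<lambda>S. (S \<inter> T, S - T)) \<circ> plus) ?E" by (rule comp_inj_on)
  moreover have "((\<lambda>S. (S \<inter> T, S - T)) \<circ> plus) ` ?E \<subseteq> ?P"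
  proof -
    have "{u \<in> T. s u = 1} = plus s \<inter> T" for s using assms(2) by (auto simp: plus_def)
    then show ?thesis by (auto simp: plus_def)
  qed
  moreover have "finite ?P" using assms(1) fin_T by simp
  ultimately have "card ?E \<le> card ?P" by (rule card_inj_on_le)
  also have "\<dots> = card {A. A \<subseteq> T \<and> card A \<le> m} * 2 ^ (card V - card T)"
    using assms fin_T by (simp add: card_cartesian_product card_Pow card_Diff_subset)
  also have "\<dots> \<le> (\<Sum>k\<le>m. card T choose k) * 2 ^ (card V - card T)"
    using card_subsets_card_le[OF fin_T] by (rule mult_right_mono) simp
  finally show ?thesis .
qed

lemma prob_compl_pmf_of_set:
  assumes "finite C" "C \<noteq> {}" "A \<subseteq> C"
  shows "1 - measure_pmf.prob (pmf_of_set C) A = card (C - A) / card C"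
proof -
  have "measure_pmf.prob (pmf_of_set C) A = card A / card C"
    using assms by (simp add: measure_pmf_of_set Int_absorb1)
  moreover have "card (C - A) = card C - card A" "card A \<le> card C"
    using assms by (simp_all add: card_Diff_subset finite_subset card_mono)
  ultimately show ?thesis
    using assms by (simp add: of_nat_diff field_simps card_gt_0_iff)
qed

section \<open>Unhappiness and the union bound\<close>

lemma tau_mult_Nsize: "tau tt w * real (Nsize w) = real_of_int \<lceil>tt * real (Nsize w)\<rceil>"
  by (simp add: tau_def Nsize_def)

text \<open>The agent placed at \<open>v\<close> itself counts towards the +1 agents of \<open>\<N>(v)\<close>, hence the
  \<open>- 2\<close> rather than \<open>- 1\<close>.\<close>
lemma few_plus_neighbours_if_not_happy:
  assumes "2*w+1 \<le> n" "v \<in> vertices n"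
    and "2 \<le> \<lceil>tt * real (Nsize w)\<rceil>"
    and "\<not> plus_happy n w tt s v"
  shows "card {u \<in> nbhd n w v - {v}. s u = 1} \<le> nat (\<lceil>tt * real (Nsize w)\<rceil> - 2)"
proof -
  have "{u \<in> nbhd n w v. (s(v := 1)) u = 1} = insert v {u \<in> nbhd n w v - {v}. s u = 1}"
    using center_in_nbhd[OF assms(2)] by auto
  then have "card {u \<in> nbhd n w v. (s(v := 1)) u = 1} = Suc (card {u \<in> nbhd n w v - {v}. s u = 1})"
    by (simp add: nbhd_eq_cyc_ball_Times)
  moreover have "real (card {u \<in> nbhd n w v. (s(v := 1)) u = 1}) < tau tt w * real (card (nbhd n w v))"
    using assms(4) unfolding plus_happy_def by simp
  ultimately show ?thesis
    using assms(3) unfolding card_nbhd[OF assms(2,1)] tau_mult_Nsize by linarith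
qed

lemma card_not_event_A_le:
  assumes "2*w+1 \<le> n" "v0 \<in> vertices n"
    and "2 \<le> \<lceil>tt * real (Nsize w)\<rceil>"
  defines "m \<equiv> nat (\<lceil>tt * real (Nsize w)\<rceil> - 2)" and "M \<equiv> Nsize w - 1"
  shows "card (configs n - event_A n w tt v0)
           \<le> card (nbhd_rad n (Rrad tt w) v0) * (\<Sum>k\<le>m. M choose k) * 2 ^ (card (vertices n) - M)"
proof -
  let ?V = "vertices n" and ?NR = "nbhd_rad n (Rrad tt w) v0"
  let ?F = "\<lambda>v. {s \<in> ?V \<rightarrow>\<^sub>E {-1,1::int}. card {u \<in> nbhd n w v - {v}. s u = 1} \<le> m}"
  have fin_V: "finite ?V" by (simp add: vertices_def)
  have fin_NR: "finite ?NR" using fin_V nbhd_rad_subset_vertices by (rule finite_subset[rotated])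
  have "configs n - event_A n w tt v0 \<subseteq> (\<Union>v\<in>?NR. ?F v)"
  proof
    fix s assume s: "s \<in> configs n - event_A n w tt v0"
    then obtain v where v: "v \<in> ?NR" "\<not> plus_happy n w tt s v"
      by (auto simp: event_A_def)
    moreover have "v \<in> ?V" using v(1) nbhd_rad_subset_vertices by blast
    ultimately have "card {u \<in> nbhd n w v - {v}. s u = 1} \<le> m"
      unfolding m_def using assms(1,3) by (intro few_plus_neighbours_if_not_happy)
    then show "s \<in> (\<Union>v\<in>?NR. ?F v)" using s v unfolding configs_def by auto
  qed
  then have "card (configs n - event_A n w tt v0) \<le> card (\<Union>v\<in>?NR. ?F v)"
    using fin_NR fin_V by (intro card_mono) (auto simp: finite_PiE)
  also have "\<dots> \<le> (\<Sum>v\<in>?NR. card (?F v))" by (rule card_UN_le[OF fin_NR])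
  also have "\<dots> \<le> (\<Sum>v\<in>?NR. (\<Sum>k\<le>m. M choose k) * 2 ^ (card ?V - M))"
  proof (rule sum_mono)
    fix v assume "v \<in> ?NR"
    then have v: "v \<in> ?V" using nbhd_rad_subset_vertices by blast
    have "nbhd n w v - {v} \<subseteq> ?V" by (auto simp: nbhd_def nbhd_rad_def)
    moreover have "card (nbhd n w v - {v}) = M"
      using card_nbhd[OF v assms(1)] center_in_nbhd[OF v]
      by (simp add: M_def nbhd_eq_cyc_ball_Times)
    ultimately show "card (?F v) \<le> (\<Sum>k\<le>m. M choose k) * 2 ^ (card ?V - M)"
      using card_configs_few_plus_le[OF fin_V, of "nbhd n w v - {v}" m] by simp
  qed
  finally show ?thesis by simp
qed

lemma prob_not_event_A_le:
  assumes "2*w+1 \<le> n" "v0 \<in> vertices n"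
    and "2 \<le> \<lceil>tt * real (Nsize w)\<rceil>"
  defines "m \<equiv> nat (\<lceil>tt * real (Nsize w)\<rceil> - 2)" and "M \<equiv> Nsize w - 1"
  shows "1 - measure_pmf.prob (pmf_of_set (configs n)) (event_A n w tt v0)
           \<le> real (card (nbhd_rad n (Rrad tt w) v0)) * real (\<Sum>k\<le>m. M choose k) / 2 ^ M"
proof -
  let ?V = "vertices n"
  have "M \<le> card (nbhd n w v0)"
    using card_nbhd[OF assms(2,1)] by (simp add: M_def)
  also have "\<dots> \<le> card ?V"
    by (intro card_mono) (auto simp: vertices_def nbhd_def nbhd_rad_def)
  finally have pow_V: "(2::real) ^ card ?V = 2 ^ (card ?V - M) * 2 ^ M"
    by (simp flip: power_add)
  have "configs n \<noteq> {}" using card_configs[of n] by auto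
  then have "1 - measure_pmf.prob (pmf_of_set (configs n)) (event_A n w tt v0)
             = card (configs n - event_A n w tt v0) / 2 ^ card ?V"
    by (simp add: prob_compl_pmf_of_set event_A_def card_configs)
  also have "\<dots> \<le> real (card (nbhd_rad n (Rrad tt w) v0) * (\<Sum>k\<le>m. M choose k)
                       * 2 ^ (card ?V - M)) / 2 ^ card ?V"
    using card_not_event_A_le[OF assms(1-3)] unfolding m_def M_def
    by (intro divide_right_mono of_nat_mono) simp_all
  also have "\<dots> = real (card (nbhd_rad n (Rrad tt w) v0)) * real (\<Sum>k\<le>m. M choose k) / 2 ^ M"
    unfolding pow_V by simp
  finally show ?thesis .
qed

section \<open>The mode of the binomial distribution\<close>

definition binomial_prob :: "nat \<Rightarrow> real \<Rightarrow> nat \<Rightarrow> real" where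
  "binomial_prob M p k = real (M choose k) * p^k * (1-p)^(M-k)"

lemma binomial_prob_nonneg: "0 \<le> p \<Longrightarrow> p \<le> 1 \<Longrightarrow> 0 \<le> binomial_prob M p k"
  by (simp add: binomial_prob_def)

lemma sum_binomial_prob: "(\<Sum>k\<le>M. binomial_prob M p k) = 1"
  using binomial_ring[of p "1-p" M] by (simp add: binomial_prob_def)

lemma choose_mult_diff: "(M choose k) * (M - k) = (M choose Suc k) * Suc k"
  using times_binomial_minus1_eq[of "Suc k" M] binomial_absorb_comp[of M k]
  by (simp add: mult.commute)

lemma binomial_prob_ratio:
  fixes M m k :: nat
  assumes "Suc k \<le> M" "p = m / M" "m < M"
  shows "binomial_prob M p k * real (M - k) * m = binomial_prob M p (Suc k) * real (Suc k) * (M - m)"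
proof -
  have minus_k: "M - k = Suc (M - Suc k)" using assms by simp
  have "binomial_prob M p k * real (M - k) * m
        = real ((M choose k) * (M - k)) * p^k * (1-p)^(M - k) * m"
    by (simp add: binomial_prob_def)
  also have "\<dots> = real ((M choose Suc k) * Suc k) * p^k * (1-p)^(M - k) * m"
    by (simp only: choose_mult_diff)
  also have "\<dots> = real ((M choose Suc k) * Suc k) * p^k * (1-p)^(M - Suc k) * (1 - p) * m"
    by (simp add: minus_k)
  also have "\<dots> = real ((M choose Suc k) * Suc k) * p^k * (1-p)^(M - Suc k) * p * (M - m)"
  proof -
    have "(1-p) * real m = p * real (M-m)"
      using assms by (simp add: field_simps of_nat_diff)
    then show ?thesis by (metis mult.assoc)
  qed
  also have "\<dots> = binomial_prob M p (Suc k) * real (Suc k) * (M - m)"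
    by (simp add: binomial_prob_def algebra_simps)
  finally show ?thesis .
qed

text \<open>Going down from the mode \<open>m\<close>, the ratio of consecutive probabilities is
  \<open>(m - i)(M - m) / ((M - m + i + 1) m) \<ge> 1 - 2j/m\<close> as long as \<open>i < j \<le> m/2\<close>.\<close>
lemma binomial_prob_step_below_mode:
  fixes M m i j :: nat
  assumes "p = m / M" "0 < m" "2*m \<le> M" "i < j" "2*j \<le> m"
  shows "(real m - 2 * real j) * binomial_prob M p (m - i) \<le> binomial_prob M p (m - i - 1) * m"
proof -
  define k where "k = m - i - 1"
  have Suc_k: "Suc k = m - i" using assms unfolding k_def by simp
  have M_k: "real (M - k) = real M - m + i + 1" "real (M - k) > 0"
    using assms unfolding k_def by (simp_all add: of_nat_diff)
  have "0 \<le> p" "p \<le> 1" using assms(1-3) by (auto simp: divide_le_eq)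
  then have nonneg: "0 \<le> binomial_prob M p (Suc k)" by (rule binomial_prob_nonneg)
  have "(real m - 2*j) * (real M - m + i + 1) \<le> (real m - 2*j) * (real M - m + j)"
    using assms by (intro mult_left_mono) auto
  also have "\<dots> \<le> (real m - j) * (real M - m)"
    using mult_right_mono[of "real m - 2*j" "real M - m" j] assms by (simp add: algebra_simps)
  also have "\<dots> \<le> (real m - i) * (real M - m)"
    using assms by (intro mult_right_mono) auto
  finally have ineq: "(real m - 2*j) * (real M - m + i + 1) \<le> (real m - i) * (real M - m)" .
  have "(real m - 2*j) * binomial_prob M p (Suc k) * real (M - k)
        = binomial_prob M p (Suc k) * ((real m - 2*j) * (real M - m + i + 1))"
    unfolding M_k(1) by (simp add: algebra_simps)
  also have "\<dots> \<le> binomial_prob M p (Suc k) * ((real m - i) * (real M - m))"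
    by (rule mult_left_mono[OF ineq nonneg])
  also have "\<dots> = binomial_prob M p k * m * real (M - k)"
    using binomial_prob_ratio[of k M p m] assms Suc_k
    by (simp add: of_nat_diff algebra_simps)
  finally show ?thesis
    using M_k(2) Suc_k unfolding k_def by simp
qed

lemma binomial_prob_below_mode_ge:
  fixes M m i j :: nat
  assumes "p = m / M" "0 < m" "2*m \<le> M" "2*j \<le> m" "i \<le> j"
  shows "((real m - 2 * real j) / m)^i * binomial_prob M p m \<le> binomial_prob M p (m - i)"
  using assms(5)
proof (induction i)
  case 0
  then show ?case by simp
next
  case (Suc i)
  have ratio_nonneg: "0 \<le> (real m - 2 * real j) / m" using assms by simp
  have "((real m - 2 * real j) / m)^(Suc i) * binomial_prob M p m
        \<le> (real m - 2 * real j) / m * binomial_prob M p (m - i)"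
    using mult_left_mono[OF Suc.IH ratio_nonneg] Suc.prems by simp
  also have "\<dots> \<le> binomial_prob M p (m - Suc i)"
    using binomial_prob_step_below_mode[OF assms(1-3), of i j] Suc.prems assms
    by (simp add: divide_le_eq mult.commute)
  finally show ?case .
qed

text \<open>The \<open>j + 1\<close> probabilities just below the mode are each at least half of it
  (Bernoulli's inequality with \<open>4j\<^sup>2 \<le> m\<close>), and they sum to at most 1.\<close>
lemma binomial_prob_mode_le_two_div:
  fixes M m j :: nat
  assumes "p = m / M" "0 < m" "2*m \<le> M" "4*j^2 \<le> m"
  shows "binomial_prob M p m \<le> 2 / (j+1)"
proof -
  have p: "0 \<le> p" "p \<le> 1" using assms(1-3) by (auto simp: divide_le_eq)
  have "2*j \<le> 4*j^2" by (cases "j = 0") (simp_all add: power2_eq_square)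
  then have j_m: "2*j \<le> m" using assms(4) by linarith
  define x where "x = (real m - 2 * real j) / m"
  have x: "0 \<le> x" "x \<le> 1" using j_m assms unfolding x_def by auto
  have "1/2 \<le> 1 + real j * (- (2 * real j / m))"
    using assms(2) of_nat_mono[OF assms(4)] by (simp add: field_simps power2_eq_square)
  also have "\<dots> \<le> (1 + (- (2 * real j / m)))^j"
    by (rule Bernoulli_inequality) (use j_m assms in \<open>simp add: field_simps\<close>)
  also have "1 + (- (2 * real j / m)) = x" unfolding x_def using assms by (simp add: field_simps)
  finally have x_j: "1/2 \<le> x^j" .
  have mode_nonneg: "0 \<le> binomial_prob M p m" by (rule binomial_prob_nonneg[OF p])
  have half_mode: "binomial_prob M p m / 2 \<le> binomial_prob M p (m - i)" if "i \<le> j" for i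
  proof -
    have "binomial_prob M p m / 2 \<le> x^j * binomial_prob M p m"
      using mult_right_mono[OF x_j mode_nonneg] by simp
    also have "\<dots> \<le> x^i * binomial_prob M p m"
      by (rule mult_right_mono[OF power_decreasing[OF that x] mode_nonneg])
    also have "\<dots> \<le> binomial_prob M p (m - i)"
      unfolding x_def by (rule binomial_prob_below_mode_ge[OF assms(1-3) j_m that])
    finally show ?thesis .
  qed
  have inj: "inj_on (\<lambda>i. m - i) {..j}" using j_m by (auto simp: inj_on_def)
  have "(j+1) * (binomial_prob M p m / 2) \<le> (\<Sum>i\<le>j. binomial_prob M p (m - i))"
    using sum_mono[of "{..j}" "\<lambda>_. binomial_prob M p m / 2"] half_mode by simp
  also have "\<dots> = (\<Sum>k\<in>(\<lambda>i. m - i) ` {..j}. binomial_prob M p k)"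
    by (simp add: sum.reindex[OF inj])
  also have "\<dots> \<le> (\<Sum>k\<le>M. binomial_prob M p k)"
    by (rule sum_mono2) (use assms binomial_prob_nonneg[OF p] in auto)
  finally show ?thesis by (simp add: sum_binomial_prob field_simps)
qed

lemma binomial_prob_mode_le:
  fixes M m :: nat
  assumes "p = m / M" "0 < m" "2*m \<le> M"
  shows "binomial_prob M p m \<le> 4 / sqrt m"
proof -
  define j where "j = nat \<lfloor>sqrt m / 2\<rfloor>"
  have sqrt_m: "sqrt m > 0" using assms by simp
  then have "sqrt m / 2 < real j + 1" unfolding j_def by linarith
  have "(2 * real j)^2 \<le> (sqrt m)^2"
    unfolding j_def using sqrt_m by (intro power_mono) linarith+
  then have "real (4*j^2) \<le> real m" by (simp add: power_mult_distrib)
  then have "4*j^2 \<le> m" by (simp only: of_nat_le_iff)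
  then have "binomial_prob M p m \<le> 2 / (j+1)" by (rule binomial_prob_mode_le_two_div[OF assms])
  also have "\<dots> \<le> 4 / sqrt m"
    using sqrt_m \<open>sqrt m / 2 < real j + 1\<close> by (simp add: field_simps)
  finally show ?thesis .
qed

section \<open>Binomial tails and entropy\<close>

lemma choose_below_le_geometric:
  fixes M m :: nat
  assumes "0 \<le> \<rho>" "real m \<le> \<rho> * (real M - m + 1)" "i \<le> m" "m \<le> M"
  shows "real (M choose (m - i)) \<le> \<rho>^i * real (M choose m)"
  using assms(3)
proof (induction i)
  case 0
  then show ?case by simp
next
  case (Suc i)
  define k where "k = m - Suc i"
  have Suc_k: "Suc k = m - i" using Suc unfolding k_def by simp
  have M_k: "real (M - k) > 0" using Suc assms unfolding k_def by simp
  have "real (Suc k) \<le> \<rho> * (real M - m + 1)" using Suc_k assms(2) by simp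
  also have "\<dots> \<le> \<rho> * real (M - k)"
    using assms Suc by (intro mult_left_mono) (auto simp: of_nat_diff k_def)
  finally have "real (M choose k) * real (M - k) \<le> real (M choose Suc k) * (\<rho> * real (M - k))"
    by (metis choose_mult_diff mult_left_mono of_nat_0_le_iff of_nat_mult)
  then have "real (M choose k) \<le> \<rho> * real (M choose Suc k)"
    using M_k by (simp add: mult.commute mult.left_commute)
  also have "\<dots> \<le> \<rho> * (\<rho>^i * real (M choose m))"
    using Suc Suc_k by (intro mult_left_mono assms(1)) simp_all
  finally show ?case unfolding k_def by simp
qed

lemma sum_choose_le_geometric:
  fixes M m :: nat
  assumes "0 \<le> \<rho>" "\<rho> < 1" "real m \<le> \<rho> * (real M - m + 1)" "m \<le> M"
  shows "real (\<Sum>k\<le>m. M choose k) \<le> real (M choose m) / (1 - \<rho>)"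
proof -
  have "bij_betw (\<lambda>i. m - i) {..m} {..m}"
    by (rule bij_betwI[where g = "\<lambda>i. m - i"]) auto
  then have "real (\<Sum>k\<le>m. M choose k) = (\<Sum>i\<le>m. real (M choose (m - i)))"
    using sum.reindex_bij_betw[of "\<lambda>i. m - i" "{..m}" "{..m}" "\<lambda>k. real (M choose k)"] by simp
  also have "\<dots> \<le> (\<Sum>i\<le>m. \<rho>^i * real (M choose m))"
    by (intro sum_mono choose_below_le_geometric[OF assms(1,3) _ assms(4)]) simp
  also have "\<dots> = (\<Sum>i<Suc m. \<rho>^i) * real (M choose m)"
    by (simp add: sum_distrib_right lessThan_Suc_atMost)
  also have "\<dots> = (1 - \<rho>^Suc m) / (1 - \<rho>) * real (M choose m)"
    using assms by (simp only: sum_gp_strict) simp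
  also have "\<dots> \<le> 1 / (1 - \<rho>) * real (M choose m)"
    using assms by (intro mult_right_mono divide_right_mono) auto
  finally show ?thesis by simp
qed

lemma bin_entropy_nonneg:
  assumes "0 < p" "p < 1"
  shows "0 \<le> bin_entropy p"
  using assms mult_nonneg_nonpos[of p "log 2 p"] mult_nonneg_nonpos[of "1-p" "log 2 (1-p)"]
  by (simp add: bin_entropy_def)

lemma bin_entropy_le_1:
  assumes "0 < p" "p < 1"
  shows "bin_entropy p \<le> 1"
proof -
  have x_ln_x: "x * (- ln x) \<le> x * ln 2 + 1/2 - x" if "0 < x" for x :: real
  proof -
    have "ln (1/(2*x)) \<le> 1/(2*x) - 1" using that by (intro ln_le_minus_one) auto
    then have "- ln x \<le> ln 2 + 1/(2*x) - 1" using that by (simp add: ln_div ln_mult)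
    then have "x * (- ln x) \<le> x * (ln 2 + 1/(2*x) - 1)" using that by (intro mult_left_mono) auto
    also have "\<dots> = x * ln 2 + 1/2 - x" using that by (simp add: field_simps)
    finally show ?thesis .
  qed
  have "bin_entropy p * ln 2 = p * (- ln p) + (1-p) * (- ln (1-p))"
    by (simp add: bin_entropy_def log_def field_simps)
  also have "\<dots> \<le> ln 2"
    using x_ln_x[of p] x_ln_x[of "1-p"] assms by (simp add: algebra_simps)
  finally show ?thesis by simp
qed

lemma two_powr_neg_bin_entropy:
  fixes M m :: nat
  assumes "0 < m" "m < M"
  shows "2 powr (- bin_entropy (m/M) * M) = (m/M)^m * (1 - m/M)^(M-m)"
proof -
  define p where "p = real m / M"
  have p: "0 < p" "p < 1" using assms unfolding p_def by auto
  have "- bin_entropy p * M = log 2 p * (M*p) + log 2 (1-p) * (M * (1-p))"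
    unfolding bin_entropy_def by (simp add: algebra_simps)
  also have "\<dots> = log 2 p * m + log 2 (1-p) * real (M - m)"
    using assms by (simp add: p_def field_simps of_nat_diff)
  finally have "2 powr (- bin_entropy p * M)
                = (2 powr log 2 p) powr m * (2 powr log 2 (1-p)) powr real (M - m)"
    by (simp add: powr_add powr_powr)
  also have "\<dots> = p^m * (1-p)^(M-m)" using p by (simp add: powr_realpow)
  finally show ?thesis unfolding p_def .
qed

lemma two_powr_entropy_div_two_pow_le:
  fixes M m :: nat
  assumes "0 < m" "m < M"
  defines "H \<equiv> bin_entropy (m/M)"
  shows "2 powr ((1 - H) * real (M+1)) / 2^M \<le> 2 * ((m/M)^m * (1 - m/M)^(M-m))"
proof -
  have "0 < m/M" "m/M < 1" using assms by auto
  then have H: "0 \<le> H" "H \<le> 1"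
    unfolding H_def using bin_entropy_nonneg bin_entropy_le_1 by auto
  have "2 powr ((1 - H) * real (M+1)) / 2^M = 2 powr ((1 - H) * real (M+1) - real M)"
    by (simp add: powr_diff powr_realpow)
  also have "\<dots> \<le> 2 powr (1 + (- H * real M))"
    using H by (intro powr_mono) (auto simp: algebra_simps)
  also have "\<dots> = 2 * 2 powr (- H * real M)"
    using powr_add[of 2 1 "- H * real M"] by simp
  also have "2 powr (- H * real M) = (m/M)^m * (1 - m/M)^(M-m)"
    unfolding H_def using assms by (intro two_powr_neg_bin_entropy)
  finally show ?thesis .
qed

text \<open>Here \<open>X\<close> stands for the number of vertices in \<open>\<N>\<^sub>R\<close>: the factor \<open>R\<^sup>2\<close> it contributes is
  exactly cancelled by the exponential decay of the binomial tail.\<close>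
lemma union_bound_le_mode_prob:
  fixes M m :: nat
  assumes tt: "0 < tt" "tt < 1/2" and m: "0 < m" "real m \<le> tt * real M"
    and R: "R = 2 powr ((1 - bin_entropy (real m / real M)) * real (M+1) / 2)"
    and X: "0 \<le> X" "X \<le> (4*R+1)^2"
  shows "X * real (\<Sum>k\<le>m. M choose k) / 2^M \<le> 200 / ((1 - tt/(1-tt)) * sqrt m)"
proof -
  define p where "p = real m / real M"
  define \<rho> where "\<rho> = tt / (1 - tt)"
  have two_m: "2*m \<le> M"
    using m mult_right_mono[of tt "1/2" "real M"] tt by linarith
  have \<rho>: "0 \<le> \<rho>" "\<rho> < 1" unfolding \<rho>_def using tt by (auto simp: field_simps)
  have "bin_entropy p \<le> 1" using m two_m by (intro bin_entropy_le_1) (auto simp: p_def)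
  then have "1 \<le> R" unfolding R p_def[symmetric] by (intro ge_one_powr_ge_zero) auto
  then have X_le: "X \<le> 25 * R^2"
    using X power_mono[of "4*R+1" "5*R" 2] by (simp add: power_mult_distrib)
  have "real m \<le> \<rho> * (real M - m + 1)"
    using m tt unfolding \<rho>_def by (simp add: field_simps)
  then have tail: "real (\<Sum>k\<le>m. M choose k) \<le> real (M choose m) / (1 - \<rho>)"
    using \<rho> two_m by (intro sum_choose_le_geometric) simp_all
  have "R^2 = 2 powr ((1 - bin_entropy p) * real (M+1))"
    unfolding R p_def by (simp add: power2_eq_square mult.commute flip: powr_add)
  then have "R^2 / 2^M \<le> 2 * (p^m * (1-p)^(M-m))"
    using two_powr_entropy_div_two_pow_le[of m M] m two_m by (simp add: p_def)
  then have "real (M choose m) * (R^2 / 2^M) \<le> real (M choose m) * (2 * (p^m * (1-p)^(M-m)))"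
    by (rule mult_left_mono) simp
  also have "\<dots> = 2 * binomial_prob M p m"
    by (simp add: binomial_prob_def)
  finally have mode: "real (M choose m) * (R^2 / 2^M) \<le> 2 * binomial_prob M p m" .
  have "X * real (\<Sum>k\<le>m. M choose k) / 2^M
        \<le> (25 * R^2) * (real (M choose m) / (1 - \<rho>)) / 2^M"
    using X(1) X_le tail by (intro divide_right_mono mult_mono) (auto intro: sum_nonneg)
  also have "\<dots> = 25 / (1 - \<rho>) * (real (M choose m) * (R^2 / 2^M))"
    by (simp add: field_simps)
  also have "\<dots> \<le> 25 / (1 - \<rho>) * (2 * (4 / sqrt m))"
    using mode binomial_prob_mode_le[OF p_def m(1) two_m] \<rho> by (intro mult_left_mono) auto
  finally show ?thesis unfolding \<rho>_def by simp
qed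

lemma prob_not_event_A_le_sqrt:
  assumes tt: "0 < tt" "tt < 1/2" and "2*w+1 \<le> n" "v0 \<in> vertices n"
    and large: "3 \<le> tt * real (Nsize w)"
  shows "1 - measure_pmf.prob (pmf_of_set (configs n)) (event_A n w tt v0)
           \<le> 200 / ((1 - tt/(1-tt)) * sqrt (tt * real (Nsize w) - 2))"
proof -
  define N where "N = Nsize w"
  define m where "m = nat (\<lceil>tt * real N\<rceil> - 2)"
  define M where "M = N - 1"
  have N: "1 \<le> N" unfolding N_def Nsize_def by simp
  have c: "2 \<le> \<lceil>tt * real N\<rceil>" using large unfolding N_def by linarith
  have m_real: "real m = real_of_int \<lceil>tt * real N\<rceil> - 2" unfolding m_def using c by simp
  then have m_ge: "tt * real N - 2 \<le> real m" and "0 < m" using large unfolding N_def by linarith+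
  have "real m \<le> tt * real M"
    using m_real tt N by (simp add: M_def of_nat_diff algebra_simps) linarith
  have "tau tt w * real N = real_of_int \<lceil>tt * real N\<rceil>"
    unfolding N_def by (rule tau_mult_Nsize)
  then have "tau' tt w = real m / real M"
    using N unfolding tau'_def N_def[symmetric] by (simp add: m_real M_def of_nat_diff)
  then have "Rrad tt w = 2 powr ((1 - bin_entropy (real m / real M)) * real (M+1) / 2)"
    using N unfolding Rrad_def N_def[symmetric] by (simp add: M_def)
  moreover have "real (card (nbhd_rad n (Rrad tt w) v0)) \<le> (4 * Rrad tt w + 1)^2"
    using assms(4) by (rule card_nbhd_rad_le) (simp add: Rrad_def)
  ultimately have "real (card (nbhd_rad n (Rrad tt w) v0)) * real (\<Sum>k\<le>m. M choose k) / 2^M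
                   \<le> 200 / ((1 - tt/(1-tt)) * sqrt m)"
    using union_bound_le_mode_prob[OF tt \<open>0 < m\<close> \<open>real m \<le> tt * real M\<close>] by simp
  also have "\<dots> \<le> 200 / ((1 - tt/(1-tt)) * sqrt (tt * real N - 2))"
    using tt m_ge large unfolding N_def
    by (intro divide_left_mono mult_left_mono mult_pos_pos) (auto simp: field_simps)
  finally show ?thesis
    using prob_not_event_A_le[OF assms(3,4) c[unfolded N_def]] unfolding m_def M_def N_def
    by linarith
qed

theorem lemmaA4:
  fixes tt :: real and nn :: "nat \<Rightarrow> nat" and v0 :: "nat \<Rightarrow> nat \<times> nat"
  assumes "0 < tt" and "tt < 1/2"
    and "\<And>w. nn w \<ge> 2 * w + 1"
    and "\<And>w. v0 w \<in> vertices (nn w)"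
  shows "(\<lambda>w. measure_pmf.prob (pmf_of_set (configs (nn w))) (event_A (nn w) w tt (v0 w)))
           \<longlonglongrightarrow> 1"
proof -
  let ?P = "\<lambda>w. measure_pmf.prob (pmf_of_set (configs (nn w))) (event_A (nn w) w tt (v0 w))"
  let ?g = "\<lambda>w. 200 / ((1 - tt/(1-tt)) * sqrt (tt * real (Nsize w) - 2))"
  have bound_to_0: "?g \<longlonglongrightarrow> 0"
    unfolding Nsize_def using assms(1,2) by real_asymp
  have "eventually (\<lambda>w. 3 \<le> tt * real (Nsize w)) sequentially"
    unfolding Nsize_def using assms(1) by real_asymp
  then have "eventually (\<lambda>w. norm (1 - ?P w) \<le> ?g w) sequentially"
  proof eventually_elim
    case (elim w)
    show ?case
      using prob_not_event_A_le_sqrt[OF assms(1,2,3,4) elim] by (simp add: measure_pmf.prob_le_1)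
  qed
  then have "(\<lambda>w. 1 - ?P w) \<longlonglongrightarrow> 0"
    using bound_to_0 by (rule Lim_null_comparison)
  then have "(\<lambda>w. 1 - (1 - ?P w)) \<longlonglongrightarrow> 1 - 0"
    by (intro tendsto_diff tendsto_const)
  then show ?thesis by simp
qed

end
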